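(* Let $S=\langle \underline{S},\sqcap,\sqcup,\Rightarrow,L,\neg,0,1\rangle$ be a rough algebra, and put $M(x)=\neg L(\neg x)$ for $x\in\underline{S}$. Define the binary relation $T$ on $\underline{S}$ by $(a,b)\in T$ if and only if there exists $c\in\underline{S}$ with $L(c)\le a\le M(c)$ and $L(c)\le b\le M(c)$ (where $\le$ is the lattice order of $\langle\underline{S},\sqcap,\sqcup\rangle$). Then $T$ is a compatible tolerance on $S$: it is reflexive and symmetric, and whenever $(a,b),(c,e)\in T$ we have $(a\sqcap c,\,b\sqcap e)\in T$ and $(a\sqcup c,\,b\sqcup e)\in T$.
   Context: A pre-rough algebra is an algebra $\langle\underline{S},\sqcap,\sqcup,\Rightarrow,L,\neg,0,1\rangle$ of type $(2,2,2,1,1,0,0)$ such that: $\langle\underline{S},\sqcap,\sqcup,\neg\rangle$ is a de Morgan lattice (with bounds $0,1$); $\neg\neg a=a$; $L(a)\sqcap a=L(a)$; $LL(a)=L(a)$; $L(1)=1$; $L(a\sqcap b)=L(a)\sqcap L(b)$; $\neg L\neg L(a)=L(a)$; $\neg L(a)\sqcup L(a)=1$; $L(a\sqcup b)=L(a)\sqcup L(b)$; if $L(a)\sqcap L(b)=L(a)$ and $\neg L(\neg(a\sqcap b))=\neg L(\neg a)$ then $a\sqcap b=a$; and $a\Rightarrow b=(\neg L(a)\sqcup L(b))\sqcap(L(\neg a)\sqcup\neg L(\neg b))$. A rough algebra is a completely distributive pre-rough algebra. The relation $T$ is called the coapproximability relation. *)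

theory Defs
  imports Main
begin

text \<open>We take the
carrier to be a whole type of class complete_distrib_lattice: lattice meet/join are
inf/sup, the bounds 0,1 are bot/top, and complete distributivity is the class axiom.\<close>

definition de_morgan_neg :: "('a::bounded_lattice \<Rightarrow> 'a) \<Rightarrow> bool" where
  "de_morgan_neg neg \<longleftrightarrow> (\<forall>a b. neg (inf a b) = sup (neg a) (neg b))"

definition pre_rough_axioms ::
  "('a::bounded_lattice \<Rightarrow> 'a \<Rightarrow> 'a) \<Rightarrow> ('a \<Rightarrow> 'a) \<Rightarrow> ('a \<Rightarrow> 'a) \<Rightarrow> bool" where
  "pre_rough_axioms imp L neg \<longleftrightarrow>
     de_morgan_neg neg \<and>
     (\<forall>a. neg (neg a) = a) \<and>
     (\<forall>a. inf (L a) a = L a) \<and>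
     (\<forall>a. L (L a) = L a) \<and>
     L top = top \<and>
     (\<forall>a b. L (inf a b) = inf (L a) (L b)) \<and>
     (\<forall>a. neg (L (neg (L a))) = L a) \<and>
     (\<forall>a. sup (neg (L a)) (L a) = top) \<and>
     (\<forall>a b. L (sup a b) = sup (L a) (L b)) \<and>
     (\<forall>a b. inf (L a) (L b) = L a \<and> neg (L (neg (inf a b))) = neg (L (neg a))
            \<longrightarrow> inf a b = a) \<and>
     (\<forall>a b. imp a b = inf (sup (neg (L a)) (L b)) (sup (L (neg a)) (neg (L (neg b)))))"

definition pre_rough_algebra ::
  "('a::{distrib_lattice,bounded_lattice} \<Rightarrow> 'a \<Rightarrow> 'a) \<Rightarrow> ('a \<Rightarrow> 'a) \<Rightarrow> ('a \<Rightarrow> 'a) \<Rightarrow> bool" where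
  "pre_rough_algebra imp L neg \<longleftrightarrow> pre_rough_axioms imp L neg"

definition rough_algebra ::
  "('a::complete_distrib_lattice \<Rightarrow> 'a \<Rightarrow> 'a) \<Rightarrow> ('a \<Rightarrow> 'a) \<Rightarrow> ('a \<Rightarrow> 'a) \<Rightarrow> bool" where
  "rough_algebra imp L neg \<longleftrightarrow> pre_rough_algebra imp L neg"

definition upperM :: "('a \<Rightarrow> 'a) \<Rightarrow> ('a \<Rightarrow> 'a) \<Rightarrow> 'a \<Rightarrow> 'a" where
  "upperM L neg x = neg (L (neg x))"

definition coapprox :: "('a::order \<Rightarrow> 'a) \<Rightarrow> ('a \<Rightarrow> 'a) \<Rightarrow> 'a \<Rightarrow> 'a \<Rightarrow> bool" where
  "coapprox L neg a b \<longleftrightarrow>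
     (\<exists>c. L c \<le> a \<and> a \<le> upperM L neg c \<and> L c \<le> b \<and> b \<le> upperM L neg c)"

end

theory Submission
  imports Defs
begin

text \<open>The relation only uses that \<open>L\<close> is deflationary and preserves both lattice operations:
then \<open>M\<close>, its De Morgan dual, is inflationary and preserves them too, so every interval
\<open>[L c, M c]\<close> contains \<open>c\<close>, and meets and joins of two such intervals lie in the interval
of \<open>inf c d\<close> and \<open>sup c d\<close> respectively.\<close>

lemma de_morgan_neg_sup:
  assumes "de_morgan_neg neg" and "\<And>a. neg (neg a) = a"
  shows "neg (sup a b) = inf (neg a) (neg b)"
  by (metis assms de_morgan_neg_def)

lemma de_morgan_neg_antimono:
  assumes "de_morgan_neg neg" and "a \<le> b"
  shows "neg b \<le> neg a"
proof -
  have "neg a = sup (neg a) (neg b)"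
    using assms inf.absorb1 unfolding de_morgan_neg_def by metis
  then show ?thesis
    by (metis sup.cobounded2)
qed

lemma pre_rough_axiomsD:
  assumes "pre_rough_axioms imp L neg"
  shows pre_rough_de_morgan: "de_morgan_neg neg"
    and pre_rough_neg_inf: "neg (inf a b) = sup (neg a) (neg b)"
    and pre_rough_neg_neg: "neg (neg a) = a"
    and pre_rough_L_le: "L a \<le> a"
    and pre_rough_L_inf: "L (inf a b) = inf (L a) (L b)"
    and pre_rough_L_sup: "L (sup a b) = sup (L a) (L b)"
  using assms unfolding pre_rough_axioms_def de_morgan_neg_def by (auto simp: inf.absorb_iff1)

lemma pre_rough_neg_sup:
  assumes "pre_rough_axioms imp L neg"
  shows "neg (sup a b) = inf (neg a) (neg b)"
  using de_morgan_neg_sup pre_rough_de_morgan pre_rough_neg_neg assms by metis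

lemma le_upperM:
  assumes "pre_rough_axioms imp L neg"
  shows "a \<le> upperM L neg a"
proof -
  have "neg (neg a) \<le> neg (L (neg a))"
    using de_morgan_neg_antimono pre_rough_de_morgan pre_rough_L_le assms by metis
  then show ?thesis
    by (simp add: upperM_def pre_rough_neg_neg[OF assms])
qed

lemma upperM_inf:
  assumes "pre_rough_axioms imp L neg"
  shows "upperM L neg (inf a b) = inf (upperM L neg a) (upperM L neg b)"
  using assms by (simp add: upperM_def pre_rough_neg_inf pre_rough_neg_sup pre_rough_L_sup)

lemma upperM_sup:
  assumes "pre_rough_axioms imp L neg"
  shows "upperM L neg (sup a b) = sup (upperM L neg a) (upperM L neg b)"
  using assms by (simp add: upperM_def pre_rough_neg_inf pre_rough_neg_sup pre_rough_L_inf)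

lemma coapprox_refl:
  assumes "pre_rough_axioms imp L neg"
  shows "coapprox L neg a a"
  unfolding coapprox_def using assms pre_rough_L_le le_upperM by blast

lemma coapprox_sym: "coapprox L neg a b \<Longrightarrow> coapprox L neg b a"
  unfolding coapprox_def by blast

lemma coapprox_inf:
  fixes L neg :: "'a::lattice \<Rightarrow> 'a"
  assumes L_inf: "\<And>x y. L (inf x y) = inf (L x) (L y)"
    and M_inf: "\<And>x y. upperM L neg (inf x y) = inf (upperM L neg x) (upperM L neg y)"
    and "coapprox L neg a b" and "coapprox L neg c e"
  shows "coapprox L neg (inf a c) (inf b e)"
proof -
  obtain x where "L x \<le> a" "a \<le> upperM L neg x" "L x \<le> b" "b \<le> upperM L neg x"
    using \<open>coapprox L neg a b\<close> unfolding coapprox_def by blast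
  moreover obtain y where "L y \<le> c" "c \<le> upperM L neg y" "L y \<le> e" "e \<le> upperM L neg y"
    using \<open>coapprox L neg c e\<close> unfolding coapprox_def by blast
  ultimately show ?thesis
    unfolding coapprox_def
    by (intro exI[of _ "inf x y"]) (simp add: L_inf M_inf le_infI1 le_infI2 inf_mono)
qed

lemma coapprox_sup:
  fixes L neg :: "'a::lattice \<Rightarrow> 'a"
  assumes L_sup: "\<And>x y. L (sup x y) = sup (L x) (L y)"
    and M_sup: "\<And>x y. upperM L neg (sup x y) = sup (upperM L neg x) (upperM L neg y)"
    and "coapprox L neg a b" and "coapprox L neg c e"
  shows "coapprox L neg (sup a c) (sup b e)"
proof -
  obtain x where "L x \<le> a" "a \<le> upperM L neg x" "L x \<le> b" "b \<le> upperM L neg x"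
    using \<open>coapprox L neg a b\<close> unfolding coapprox_def by blast
  moreover obtain y where "L y \<le> c" "c \<le> upperM L neg y" "L y \<le> e" "e \<le> upperM L neg y"
    using \<open>coapprox L neg c e\<close> unfolding coapprox_def by blast
  ultimately show ?thesis
    unfolding coapprox_def
    by (intro exI[of _ "sup x y"]) (simp add: L_sup M_sup le_supI1 le_supI2 sup_mono)
qed

theorem proposition2p1:
  fixes imp :: "'a::complete_distrib_lattice \<Rightarrow> 'a \<Rightarrow> 'a"
    and L neg :: "'a \<Rightarrow> 'a"
  assumes "rough_algebra imp L neg"
  shows "(\<forall>a. coapprox L neg a a)
       \<and> (\<forall>a b. coapprox L neg a b \<longrightarrow> coapprox L neg b a)
       \<and> (\<forall>a b c e. coapprox L neg a b \<and> coapprox L neg c e \<longrightarrow>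
            coapprox L neg (inf a c) (inf b e) \<and> coapprox L neg (sup a c) (sup b e))"
proof -
  have pre: "pre_rough_axioms imp L neg"
    using assms unfolding rough_algebra_def pre_rough_algebra_def .
  have "coapprox L neg (inf a c) (inf b e)" and "coapprox L neg (sup a c) (sup b e)"
    if "coapprox L neg a b" and "coapprox L neg c e" for a b c e
    using that coapprox_inf[OF pre_rough_L_inf[OF pre] upperM_inf[OF pre]]
      coapprox_sup[OF pre_rough_L_sup[OF pre] upperM_sup[OF pre]] by blast+
  then show ?thesis
    using coapprox_refl[OF pre] coapprox_sym by blast
qed

end
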